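(* For any $n\geq 1$, $b\geq 2$ and even, $R_n(b)$ listed in co-Reflected Gray Code Order is a $3$-adjacent Gray code.
   Context: A restricted growth function of length $n$ is an integer sequence $s_1s_2\ldots s_n$ with $s_1=0$ and $0\leq s_{i+1}\leq \max\{s_j\}_{j=1}^i+1$ for $1\leq i\leq n-1$; $R_n$ is the set of these, and for $b\geq1$, $R_n(b)=\{s_1\ldots s_n\in R_n : \max\{s_i\}_{i=1}^n\leq b\}$. The co-Reflected Gray Code Order on $\{0,1,\ldots,m-1\}^n$ ($m\geq2$) is defined by: $s_1\ldots s_n$ is less than $t_1\ldots t_n$ if, for the position $k$ with $s_i=t_i$ ($1\leq i\leq k-1$) and $s_k\neq t_k$, either $U_k$ is even and $s_k<t_k$, or $U_k$ is odd and $s_k>t_k$, where $U_k=|\{i\in\{1,\ldots,k-1\}: s_i\neq0,\ s_i \text{ even}\}|$. A list of same-length sequences is a $d$-adjacent Gray code if successive sequences differ in at most $d$ positions and these positions are adjacent. *)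

theory Defs
  imports Main
begin

text \<open>Sequences are 0-indexed lists: position i of the list is s_(i+1) of the paper.\<close>

definition is_rgf :: "nat list \<Rightarrow> bool" where
  "is_rgf s \<longleftrightarrow> s \<noteq> [] \<and> s ! 0 = 0 \<and>
     (\<forall>i. Suc i < length s \<longrightarrow> s ! Suc i \<le> Max (set (take (Suc i) s)) + 1)"


definition RGF_bounded :: "nat \<Rightarrow> nat \<Rightarrow> nat list set" where
  "RGF_bounded n b = {s. length s = n \<and> is_rgf s \<and> Max (set s) \<le> b}"

definition U :: "nat list \<Rightarrow> nat \<Rightarrow> nat" where
  "U s k = card {i. i < k \<and> s ! i \<noteq> 0 \<and> even (s ! i)}"

definition coRGC_less :: "nat list \<Rightarrow> nat list \<Rightarrow> bool" where
  "coRGC_less s t \<longleftrightarrow> length s = length t \<and>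
     (\<exists>k < length s. take k s = take k t \<and> s ! k \<noteq> t ! k \<and>
        ((even (U s k) \<and> s ! k < t ! k) \<or> (odd (U s k) \<and> s ! k > t ! k)))"

definition diff_positions :: "nat list \<Rightarrow> nat list \<Rightarrow> nat set" where
  "diff_positions s t = {k. k < length s \<and> s ! k \<noteq> t ! k}"

definition adjacent_gray :: "nat \<Rightarrow> nat list list \<Rightarrow> bool" where
  "adjacent_gray d L \<longleftrightarrow>
     (\<forall>x\<in>set L. \<forall>y\<in>set L. length x = length y) \<and>
     (\<forall>i. Suc i < length L \<longrightarrow>
        card (diff_positions (L ! i) (L ! Suc i)) \<le> d \<and>
        (\<exists>a c. diff_positions (L ! i) (L ! Suc i) = {a..<c}))"

end

theory Submission
  imports Defs
begin

(*
  Two lists that are consecutive in co-RGC order first differ at some position k. The order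
  compares the first differing entries by a rule depending only on the common prefix, so the
  predecessor s is the last element of R_n(b) extending s_1..s_(k+1) and the successor t is the
  first one extending t_1..t_(k+1); both are built greedily, taking the extreme admissible value at
  every later position. For even b such a greedy tail follows v \<mapsto> (if v odd then v + 1 else 0):
  an even nonzero entry flips the parity of U and forces 0 next, an odd entry v < b is followed by
  v + 1, and 0 by 0. Two steps of this map always give 0, so s and t agree from position k + 3 on,
  and at position k + 2 as soon as they agree at k + 1.
*)

definition coRGC_step_less :: "nat list \<Rightarrow> nat \<Rightarrow> nat \<Rightarrow> bool" where
  "coRGC_step_less q v w \<longleftrightarrow>
     (even (U q (length q)) \<and> v < w) \<or> (odd (U q (length q)) \<and> w < v)"

lemma coRGC_step_less_irrefl: "\<not> coRGC_step_less q v v"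
  by (auto simp: coRGC_step_less_def)

lemma coRGC_step_less_trans:
  "coRGC_step_less q u v \<Longrightarrow> coRGC_step_less q v w \<Longrightarrow> coRGC_step_less q u w"
  by (auto simp: coRGC_step_less_def)

lemma coRGC_step_less_total: "v \<noteq> w \<Longrightarrow> coRGC_step_less q v w \<or> coRGC_step_less q w v"
  by (auto simp: coRGC_step_less_def)

lemma U_take: "U (take k s) k = U s k"
  unfolding U_def by (rule arg_cong[where f = card]) auto

lemma coRGC_less_iff:
  "coRGC_less s t \<longleftrightarrow> length s = length t \<and>
     (\<exists>k < length s. take k s = take k t \<and> coRGC_step_less (take k s) (s ! k) (t ! k))"
proof -
  have step: "coRGC_step_less (take k s) v w \<longleftrightarrow> (even (U s k) \<and> v < w) \<or> (odd (U s k) \<and> w < v)"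
    if "k < length s" for k v w
    using that by (simp add: coRGC_step_less_def U_take min_def)
  show ?thesis
    unfolding coRGC_less_def using step by (metis less_irrefl)
qed

lemma coRGC_lessI:
  "length s = length t \<Longrightarrow> k < length s \<Longrightarrow> take k s = take k t \<Longrightarrow>
    coRGC_step_less (take k s) (s ! k) (t ! k) \<Longrightarrow> coRGC_less s t"
  unfolding coRGC_less_iff by blast

lemma coRGC_lessE:
  assumes "coRGC_less s t"
  obtains k where "length s = length t" "k < length s" "take k s = take k t"
    "coRGC_step_less (take k s) (s ! k) (t ! k)"
  using assms unfolding coRGC_less_iff by blast

lemma take_eq_imp_nth_eq: "take k s = take k t \<Longrightarrow> i < k \<Longrightarrow> s ! i = t ! i"
  by (metis nth_take)

lemma take_eq_mono: "take k s = take k t \<Longrightarrow> j \<le> k \<Longrightarrow> take j s = take j t"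
  by (metis min.absorb1 take_take)

lemma coRGC_less_trans: "transp coRGC_less"
proof (rule transpI)
  fix s t w assume "coRGC_less s t" "coRGC_less t w"
  then obtain k k' where len: "length s = length t" "length t = length w"
    and k: "k < length s" "take k s = take k t" "coRGC_step_less (take k s) (s ! k) (t ! k)"
    and k': "k' < length t" "take k' t = take k' w" "coRGC_step_less (take k' t) (t ! k') (w ! k')"
    by (elim coRGC_lessE)
  consider "k < k'" | "k' < k" | "k = k'" by linarith
  then show "coRGC_less s w"
  proof cases
    case 1
    have prefix: "take k s = take k w" using k(2) take_eq_mono[OF k'(2)] 1 by simp
    have "t ! k = w ! k" using take_eq_imp_nth_eq[OF k'(2) 1] .
    then have "coRGC_step_less (take k s) (s ! k) (w ! k)" using k(3) by simp
    then show ?thesis using coRGC_lessI[OF _ k(1) prefix] len by simp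
  next
    case 2
    have prefix: "take k' s = take k' w" using k'(2) take_eq_mono[OF k(2)] 2 by simp
    have "s ! k' = t ! k'" using take_eq_imp_nth_eq[OF k(2) 2] .
    then have "coRGC_step_less (take k' s) (s ! k') (w ! k')"
      using k'(3) take_eq_mono[OF k(2)] 2 by simp
    then show ?thesis using coRGC_lessI[OF _ _ prefix] k'(1) len by simp
  next
    case 3
    have prefix: "take k s = take k w" using k(2) k'(2) 3 by simp
    have "coRGC_step_less (take k s) (s ! k) (w ! k)"
      using coRGC_step_less_trans[OF k(3)] k'(3) k(2) 3 by simp
    then show ?thesis using coRGC_lessI[OF _ k(1) prefix] len by simp
  qed
qed

lemma coRGC_less_irrefl: "\<not> coRGC_less s s"
  by (auto simp: coRGC_less_iff coRGC_step_less_irrefl)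

lemma coRGC_less_asym: "asymp coRGC_less"
proof (rule asympI)
  fix s t assume "coRGC_less s t"
  then show "\<not> coRGC_less t s"
    using transpD[OF coRGC_less_trans] coRGC_less_irrefl by blast
qed

lemma first_difference:
  assumes "length s = length t" "s \<noteq> t"
  obtains k where "k < length s" "take k s = take k t" "s ! k \<noteq> t ! k"
proof -
  let ?P = "\<lambda>k. k < length s \<and> s ! k \<noteq> t ! k"
  have "\<exists>k. ?P k"
  proof (rule ccontr)
    assume "\<nexists>k. ?P k"
    then have "s = t" using assms(1) by (intro nth_equalityI) auto
    then show False using assms(2) by simp
  qed
  then have least: "?P (LEAST k. ?P k)" by (rule LeastI_ex)
  have "take (LEAST k. ?P k) s = take (LEAST k. ?P k) t"
  proof (rule nth_equalityI)
    fix i assume "i < length (take (LEAST k. ?P k) s)"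
    then have "i < (LEAST k. ?P k)" "i < length s" by auto
    then show "take (LEAST k. ?P k) s ! i = take (LEAST k. ?P k) t ! i"
      using not_less_Least[of i ?P] by simp
  qed (use assms(1) in simp)
  with least that show thesis by blast
qed

lemma coRGC_less_total:
  assumes "length s = length t" "s \<noteq> t"
  shows "coRGC_less s t \<or> coRGC_less t s"
proof -
  obtain k where k: "k < length s" "take k s = take k t" "s ! k \<noteq> t ! k"
    using first_difference[OF assms] .
  consider "coRGC_step_less (take k s) (s ! k) (t ! k)" | "coRGC_step_less (take k t) (t ! k) (s ! k)"
    using coRGC_step_less_total[OF k(3)] k(2) by metis
  then show ?thesis
  proof cases
    case 1
    then show ?thesis using coRGC_lessI[OF assms(1) k(1,2)] by blast
  next
    case 2
    then show ?thesis using coRGC_lessI[of t s k] assms(1) k(1,2) by simp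
  qed
qed

lemma ex_sorted_wrt_list:
  assumes "finite A" "transp R" "asymp R"
    and total: "\<And>x y. x \<in> A \<Longrightarrow> y \<in> A \<Longrightarrow> x \<noteq> y \<Longrightarrow> R x y \<or> R y x"
  shows "\<exists>L. set L = A \<and> distinct L \<and> sorted_wrt R L"
  using assms(1) total
proof (induction A rule: finite_induct)
  case empty
  show ?case by simp
next
  case (insert x F)
  then obtain L where L: "set L = F" "distinct L" "sorted_wrt R L" by blast
  let ?L = "filter (\<lambda>y. R y x) L @ x # filter (R x) L"
  have "set ?L = insert x F"
    using insert.prems insert.hyps(2) L(1) by auto
  moreover have "distinct ?L"
    using L(2) asympD[OF assms(3)] by (auto simp: distinct_append)
  moreover have "sorted_wrt R ?L"
    using L(3) transpD[OF assms(2)] by (auto simp: sorted_wrt_append intro: sorted_wrt_filter)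
  ultimately show ?case by blast
qed

lemma sorted_wrt_nth_Suc_no_between:
  assumes "sorted_wrt R L" "asymp R" "Suc i < length L"
    and "w \<in> set L" "R (L ! i) w" "R w (L ! Suc i)"
  shows False
proof -
  obtain j where j: "j < length L" "L ! j = w"
    using assms(4) by (auto simp: in_set_conv_nth)
  have "a < c" if "R (L ! a) (L ! c)" "a < length L" for a c
  proof (rule ccontr)
    assume "\<not> a < c"
    then consider "c < a" | "c = a" by linarith
    then have "R (L ! c) (L ! a)"
      by cases (use sorted_wrt_nth_less[OF assms(1)] that in auto)
    then show False using that(1) asympD[OF assms(2)] by blast
  qed
  then have "i < j" "j < Suc i" using assms(3,5,6) j by auto
  then show False by simp
qed

definition rgf_admissible :: "nat \<Rightarrow> nat list \<Rightarrow> nat \<Rightarrow> bool" where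
  "rgf_admissible b q v \<longleftrightarrow> v \<le> Max (set q) + 1 \<and> v \<le> b"

lemma is_rgf_snoc:
  assumes "is_rgf q" "v \<le> Max (set q) + 1"
  shows "is_rgf (q @ [v])"
proof -
  have "(q @ [v]) ! Suc i \<le> Max (set (take (Suc i) (q @ [v]))) + 1"
    if "Suc i < length (q @ [v])" for i
  proof (cases "Suc i < length q")
    case True
    then show ?thesis using assms(1) by (simp add: is_rgf_def nth_append)
  next
    case False
    then have "Suc i = length q" using that by simp
    then show ?thesis using assms(2) by (simp add: nth_append)
  qed
  then show ?thesis using assms(1) by (simp add: is_rgf_def nth_append)
qed

lemma is_rgf_take:
  assumes "is_rgf s" "0 < j"
  shows "is_rgf (take j s)"
proof -
  have "take j s ! Suc i \<le> Max (set (take (Suc i) (take j s))) + 1"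
    if "Suc i < length (take j s)" for i
  proof -
    have "Suc i < j" "Suc i < length s" using that by auto
    then have "s ! Suc i \<le> Max (set (take (Suc i) s)) + 1"
      using assms(1) unfolding is_rgf_def by blast
    moreover have "take (Suc i) (take j s) = take (Suc i) s"
      using \<open>Suc i < j\<close> by (simp add: min_def)
    ultimately show ?thesis using \<open>Suc i < j\<close> by simp
  qed
  then show ?thesis using assms by (simp add: is_rgf_def)
qed

lemma RGF_bounded_take:
  assumes "s \<in> RGF_bounded n b" "0 < j" "j \<le> n"
  shows "take j s \<in> RGF_bounded j b"
proof -
  have s: "length s = n" "is_rgf s" "Max (set s) \<le> b" "s \<noteq> []"
    using assms(1) by (auto simp: RGF_bounded_def is_rgf_def)
  have "Max (set (take j s)) \<le> b"
    using s(3,4) assms(2) set_take_subset[of j s] by auto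
  then show ?thesis
    using s assms(2,3) is_rgf_take by (auto simp: RGF_bounded_def)
qed

lemma RGF_bounded_snoc:
  assumes "q \<in> RGF_bounded j b" "rgf_admissible b q v"
  shows "q @ [v] \<in> RGF_bounded (Suc j) b"
  using assms is_rgf_snoc by (auto simp: RGF_bounded_def rgf_admissible_def is_rgf_def)

lemma RGF_bounded_nth_admissible:
  assumes "s \<in> RGF_bounded n b" "0 < p" "p < n"
  shows "rgf_admissible b (take p s) (s ! p)"
proof -
  have s: "length s = n" "is_rgf s" "Max (set s) \<le> b"
    using assms(1) by (auto simp: RGF_bounded_def)
  obtain i where "p = Suc i" using assms(2) gr0_conv_Suc by blast
  then have "s ! p \<le> Max (set (take p s)) + 1"
    using s(1,2) assms(3) unfolding is_rgf_def by blast
  moreover have "s ! p \<le> Max (set s)" using s(1) assms(3) by simp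
  ultimately show ?thesis using s(3) assms(2) by (simp add: rgf_admissible_def)
qed

lemma finite_RGF_bounded: "finite (RGF_bounded n b)"
proof (rule finite_subset)
  show "RGF_bounded n b \<subseteq> {xs. set xs \<subseteq> {0..b} \<and> length xs = n}"
    by (auto simp: RGF_bounded_def is_rgf_def)
  show "finite {xs. set xs \<subseteq> {0..b} \<and> length xs = n}"
    by (rule finite_lists_length_eq) simp
qed

fun greedy_ext :: "(nat list \<Rightarrow> nat) \<Rightarrow> nat list \<Rightarrow> nat \<Rightarrow> nat list" where
  "greedy_ext f q 0 = q"
| "greedy_ext f q (Suc r) = greedy_ext f (q @ [f q]) r"

lemma greedy_ext_prefix: "\<exists>ys. greedy_ext f q r = q @ ys"
proof (induction r arbitrary: q)
  case (Suc r)
  then obtain ys where "greedy_ext f (q @ [f q]) r = (q @ [f q]) @ ys" by blast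
  then show ?case by simp
qed simp

lemma length_greedy_ext [simp]: "length (greedy_ext f q r) = length q + r"
  by (induction r arbitrary: q) auto

lemma take_greedy_ext: "take (length q) (greedy_ext f q r) = q"
  using greedy_ext_prefix[of f q r] by auto

lemma nth_greedy_ext:
  "length q \<le> p \<Longrightarrow> p < length q + r \<Longrightarrow> greedy_ext f q r ! p = f (take p (greedy_ext f q r))"
proof (induction r arbitrary: q)
  case (Suc r)
  obtain ys where ys: "greedy_ext f (q @ [f q]) r = q @ f q # ys"
    using greedy_ext_prefix[of f "q @ [f q]" r] by auto
  show ?case
  proof (cases "p = length q")
    case True
    then show ?thesis by (simp add: ys)
  next
    case False
    then show ?thesis using Suc by simp
  qed
qed simp

lemma greedy_ext_in_RGF_bounded:
  assumes "q \<in> RGF_bounded j b" "\<And>q. rgf_admissible b q (f q)"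
  shows "greedy_ext f q r \<in> RGF_bounded (j + r) b"
  using assms(1)
proof (induction r arbitrary: q j)
  case (Suc r)
  then show ?case using RGF_bounded_snoc[OF Suc.prems assms(2)] by fastforce
qed simp

lemma greedy_ext_first_difference:
  assumes s: "s \<in> RGF_bounded n b" and j: "0 < j" "j \<le> n"
    and E: "E = greedy_ext f (take j s) (n - j)" and "s \<noteq> E"
  obtains p where "j \<le> p" "p < n" "take p s = take p E"
    "E ! p = f (take p s)" "s ! p \<noteq> f (take p s)" "rgf_admissible b (take p s) (s ! p)"
proof -
  have len: "length s = n" "length E = n" using s j by (auto simp: E RGF_bounded_def)
  obtain p where p: "p < n" "take p s = take p E" "s ! p \<noteq> E ! p"
    using first_difference[of s E] len \<open>s \<noteq> E\<close> by auto
  have "length (take j s) = j" using len(1) j(2) by simp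
  then have "take j E = take j s"
    using take_greedy_ext[of "take j s" f "n - j"] by (simp add: E)
  then have "j \<le> p" using p(3) take_eq_imp_nth_eq[of j E s p] by (metis not_le)
  moreover have "E ! p = f (take p s)"
    using nth_greedy_ext[of "take j s" p "n - j" f] p(1,2) j(2) \<open>j \<le> p\<close> len(1) by (simp add: E)
  moreover have "rgf_admissible b (take p s) (s ! p)"
    using RGF_bounded_nth_admissible[OF s _ p(1)] j(1) \<open>j \<le> p\<close> by simp
  ultimately show thesis
    using that p by metis
qed

definition greedy_next :: "bool \<Rightarrow> nat \<Rightarrow> nat list \<Rightarrow> nat" where
  "greedy_next up b q = (if even (U q (length q)) = up then min (Max (set q) + 1) b else 0)"

lemma greedy_next_admissible: "rgf_admissible b q (greedy_next up b q)"
  by (simp add: greedy_next_def rgf_admissible_def)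

lemma greedy_next_True_greatest:
  "rgf_admissible b q v \<Longrightarrow> v \<noteq> greedy_next True b q \<Longrightarrow> coRGC_step_less q v (greedy_next True b q)"
  by (auto simp: greedy_next_def rgf_admissible_def coRGC_step_less_def)

lemma greedy_next_False_least:
  "rgf_admissible b q v \<Longrightarrow> v \<noteq> greedy_next False b q \<Longrightarrow> coRGC_step_less q (greedy_next False b q) v"
  by (auto simp: greedy_next_def rgf_admissible_def coRGC_step_less_def)

lemma coRGC_less_greedy_ext_True:
  fixes s :: "nat list" and n b j :: nat
  defines "E \<equiv> greedy_ext (greedy_next True b) (take j s) (n - j)"
  assumes s: "s \<in> RGF_bounded n b" and j: "0 < j" "j \<le> n" and "s \<noteq> E"
  shows "coRGC_less s E"
proof -
  obtain p where p: "p < n" "take p s = take p E" "E ! p = greedy_next True b (take p s)"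
    "s ! p \<noteq> greedy_next True b (take p s)" "rgf_admissible b (take p s) (s ! p)"
    using greedy_ext_first_difference[OF s j meta_eq_to_obj_eq[OF E_def] \<open>s \<noteq> E\<close>] by metis
  have "coRGC_step_less (take p s) (s ! p) (E ! p)"
    using greedy_next_True_greatest[OF p(5,4)] p(3) by simp
  then show ?thesis
    using coRGC_lessI[OF _ _ p(2)] p(1) s j by (simp add: E_def RGF_bounded_def)
qed

lemma coRGC_less_greedy_ext_False:
  fixes s :: "nat list" and n b j :: nat
  defines "E \<equiv> greedy_ext (greedy_next False b) (take j s) (n - j)"
  assumes s: "s \<in> RGF_bounded n b" and j: "0 < j" "j \<le> n" and "s \<noteq> E"
  shows "coRGC_less E s"
proof -
  obtain p where p: "p < n" "take p s = take p E" "E ! p = greedy_next False b (take p s)"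
    "s ! p \<noteq> greedy_next False b (take p s)" "rgf_admissible b (take p s) (s ! p)"
    using greedy_ext_first_difference[OF s j meta_eq_to_obj_eq[OF E_def] \<open>s \<noteq> E\<close>] by metis
  have "coRGC_step_less (take p E) (E ! p) (s ! p)"
    using greedy_next_False_least[OF p(5,4)] p(2,3) by simp
  then show ?thesis
    using coRGC_lessI[OF _ _ p(2)[symmetric]] p(1) s j by (simp add: E_def RGF_bounded_def)
qed

definition greedy_succ :: "nat \<Rightarrow> nat" where
  "greedy_succ v = (if odd v then v + 1 else 0)"

lemma greedy_succ_greedy_succ: "greedy_succ (greedy_succ v) = 0"
  by (simp add: greedy_succ_def)

lemma U_snoc:
  "U (q @ [v]) (Suc (length q)) = U q (length q) + (if v \<noteq> 0 \<and> even v then 1 else 0)"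
proof -
  have "{i. i < Suc (length q) \<and> (q @ [v]) ! i \<noteq> 0 \<and> even ((q @ [v]) ! i)} =
      {i. i < length q \<and> q ! i \<noteq> 0 \<and> even (q ! i)} \<union> (if v \<noteq> 0 \<and> even v then {length q} else {})"
    by (auto simp: nth_append less_Suc_eq)
  then show ?thesis by (simp add: U_def)
qed

lemma greedy_next_snoc:
  assumes "q \<noteq> []" "Max (set q) \<le> b" "even b"
  shows "greedy_next up b (q @ [greedy_next up b q]) = greedy_succ (greedy_next up b q)"
proof (cases "even (U q (length q)) = up")
  case True
  define v where "v = min (Max (set q) + 1) b"
  have v: "greedy_next up b q = v" using True by (simp add: greedy_next_def v_def)
  have "Max (set q) \<le> v" using assms(2) unfolding v_def by linarith
  moreover have "Max (set (q @ [v])) = max v (Max (set q))" using assms(1) by simp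
  ultimately have "Max (set (q @ [v])) = v" by simp
  moreover have "odd v \<Longrightarrow> v + 1 \<le> b"
    using assms(3) by (cases "v = b") (auto simp: v_def)
  moreover have "v = 0 \<Longrightarrow> b = 0" by (simp add: v_def)
  ultimately show ?thesis using True unfolding v by (auto simp: greedy_next_def greedy_succ_def U_snoc)
next
  case False
  then show ?thesis by (simp add: greedy_next_def greedy_succ_def U_snoc)
qed

lemma nth_Suc_greedy_ext_greedy_next:
  fixes up :: bool
  assumes q: "q \<in> RGF_bounded j b" and "even b" "j \<le> p" "Suc p < j + r"
  defines "E \<equiv> greedy_ext (greedy_next up b) q r"
  shows "E ! Suc p = greedy_succ (E ! p)"
proof -
  have E: "E \<in> RGF_bounded (j + r) b"
    unfolding E_def using greedy_ext_in_RGF_bounded[OF q greedy_next_admissible] .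
  have j: "0 < j" "length q = j" using q by (auto simp: RGF_bounded_def is_rgf_def)
  have "length E = j + r" using j(2) by (simp add: E_def)
  have prefix: "take p E \<in> RGF_bounded p b"
    using RGF_bounded_take[OF E] j(1) assms(3,4) by simp
  then have prefix_bounds: "take p E \<noteq> []" "Max (set (take p E)) \<le> b"
    by (auto simp: RGF_bounded_def is_rgf_def simp del: Max_le_iff)
  have nth: "E ! i = greedy_next up b (take i E)" if "j \<le> i" "i < j + r" for i
    using nth_greedy_ext[of q i r] that j(2) by (simp add: E_def)
  have "E ! Suc p = greedy_next up b (take p E @ [E ! p])"
    using nth[of "Suc p"] assms(3,4) \<open>length E = j + r\<close>
    by (simp add: take_Suc_conv_app_nth)
  also have "\<dots> = greedy_succ (E ! p)"
    using greedy_next_snoc[OF prefix_bounds assms(2)] nth[of p] assms(3,4) by simp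
  finally show ?thesis .
qed

lemma diff_positions_of_collapsing_recurrence:
  assumes len: "length s = n" "length t = n"
    and k: "k < n" "take k s = take k t" "s ! k \<noteq> t ! k"
    and rec: "\<And>p. k < p \<Longrightarrow> Suc p < n \<Longrightarrow> s ! Suc p = g (s ! p) \<and> t ! Suc p = g (t ! p)"
    and collapse: "\<And>x. g (g x) = z"
  shows "\<exists>c \<le> k + 3. diff_positions s t = {k..<c}"
proof -
  have late: "s ! p = t ! p" if "k + 3 \<le> p" "p < n" for p
  proof -
    define i where "i = p - 2"
    have i: "p = Suc (Suc i)" "k < i" using that(1) by (auto simp: i_def)
    then show ?thesis using rec[of i] rec[of "Suc i"] that(2) collapse by simp
  qed
  have second: "Suc k \<in> diff_positions s t" if "Suc (Suc k) \<in> diff_positions s t"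
    using that rec[of "Suc k"] len by (auto simp: diff_positions_def)
  define c where
    "c = (if Suc (Suc k) \<in> diff_positions s t then k + 3
          else if Suc k \<in> diff_positions s t then k + 2 else k + 1)"
  have "p \<in> diff_positions s t \<longleftrightarrow> p \<in> {k..<c}" for p
  proof -
    consider "p < k" | "p = k" | "p = Suc k" | "p = Suc (Suc k)" | "k + 3 \<le> p" by linarith
    then show ?thesis
    proof cases
      case 1
      then show ?thesis using take_eq_imp_nth_eq[OF k(2)] by (simp add: diff_positions_def)
    next
      case 2
      then show ?thesis using k(1,3) len(1) by (simp add: diff_positions_def c_def)
    next
      case 3
      then show ?thesis using second by (simp add: c_def)
    next
      case 4
      then show ?thesis by (simp add: c_def)
    next
      case 5
      then have "p \<notin> diff_positions s t" using late len(1) by (simp add: diff_positions_def)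
      then show ?thesis using 5 by (simp add: c_def)
    qed
  qed
  moreover have "c \<le> k + 3" by (simp add: c_def)
  ultimately show ?thesis by blast
qed

lemma consecutive_coRGC_greedy:
  assumes s: "s \<in> RGF_bounded n b" and t: "t \<in> RGF_bounded n b"
    and k: "k < n" "take k s = take k t" "coRGC_step_less (take k s) (s ! k) (t ! k)"
    and no_between: "\<And>w. w \<in> RGF_bounded n b \<Longrightarrow> coRGC_less s w \<Longrightarrow> coRGC_less w t \<Longrightarrow> False"
  shows "s = greedy_ext (greedy_next True b) (take (Suc k) s) (n - Suc k)"
    and "t = greedy_ext (greedy_next False b) (take (Suc k) t) (n - Suc k)"
proof -
  have len: "length s = n" "length t = n" using s t by (auto simp: RGF_bounded_def)
  have extension: "greedy_ext f (take (Suc k) u) (n - Suc k) \<in> RGF_bounded n b"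
    and extension_prefix: "take (Suc k) (greedy_ext f (take (Suc k) u) (n - Suc k)) = take (Suc k) u"
    if "u \<in> RGF_bounded n b" "\<And>q. rgf_admissible b q (f q)" for u f
  proof -
    have "take (Suc k) u \<in> RGF_bounded (Suc k) b" using RGF_bounded_take[OF that(1)] k(1) by simp
    then have "greedy_ext f (take (Suc k) u) (n - Suc k) \<in> RGF_bounded (Suc k + (n - Suc k)) b"
      using that(2) by (rule greedy_ext_in_RGF_bounded)
    then show "greedy_ext f (take (Suc k) u) (n - Suc k) \<in> RGF_bounded n b" using k(1) by simp
    have "length (take (Suc k) u) = Suc k" using that(1) k(1) by (simp add: RGF_bounded_def)
    then show "take (Suc k) (greedy_ext f (take (Suc k) u) (n - Suc k)) = take (Suc k) u"
      using take_greedy_ext by metis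
  qed
  have agree: "take k w = take k u" "w ! k = u ! k" if "take (Suc k) w = take (Suc k) u" for w u
    using that take_eq_mono[OF that] take_eq_imp_nth_eq[OF that, of k] by simp_all
  show "s = greedy_ext (greedy_next True b) (take (Suc k) s) (n - Suc k)" (is "s = ?S")
  proof (rule ccontr)
    assume "s \<noteq> ?S"
    have "coRGC_less ?S t"
      using agree[OF extension_prefix[of s "greedy_next True b", OF s greedy_next_admissible]] k len extension[of s "greedy_next True b", OF s greedy_next_admissible]
      by (intro coRGC_lessI[of _ _ k]) (auto simp: RGF_bounded_def)
    then show False
      using no_between extension[of s "greedy_next True b", OF s greedy_next_admissible]
        coRGC_less_greedy_ext_True[OF s _ _ \<open>s \<noteq> ?S\<close>] k(1) by simp
  qed
  show "t = greedy_ext (greedy_next False b) (take (Suc k) t) (n - Suc k)" (is "t = ?T")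
  proof (rule ccontr)
    assume "t \<noteq> ?T"
    have "coRGC_less s ?T"
      using agree[OF extension_prefix[of t "greedy_next False b", OF t greedy_next_admissible]] k len extension[of t "greedy_next False b", OF t greedy_next_admissible]
      by (intro coRGC_lessI[of _ _ k]) (auto simp: RGF_bounded_def)
    then show False
      using no_between extension[of t "greedy_next False b", OF t greedy_next_admissible]
        coRGC_less_greedy_ext_False[OF t _ _ \<open>t \<noteq> ?T\<close>] k(1) by simp
  qed
qed

lemma consecutive_coRGC_diff_positions:
  assumes "even b" and s: "s \<in> RGF_bounded n b" and t: "t \<in> RGF_bounded n b" and "coRGC_less s t"
    and no_between: "\<And>w. w \<in> RGF_bounded n b \<Longrightarrow> coRGC_less s w \<Longrightarrow> coRGC_less w t \<Longrightarrow> False"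
  shows "card (diff_positions s t) \<le> 3 \<and> (\<exists>a c. diff_positions s t = {a..<c})"
proof -
  have len: "length s = n" "length t = n" using s t by (auto simp: RGF_bounded_def)
  obtain k where k: "k < n" "take k s = take k t" "coRGC_step_less (take k s) (s ! k) (t ! k)"
    using coRGC_lessE[OF \<open>coRGC_less s t\<close>] len by metis
  have differ: "s ! k \<noteq> t ! k" using k(3) coRGC_step_less_irrefl by fastforce
  have rec: "u ! Suc p = greedy_succ (u ! p)"
    if "u \<in> RGF_bounded n b" "u = greedy_ext (greedy_next up b) (take (Suc k) u) (n - Suc k)"
      "k < p" "Suc p < n" for u up p
  proof -
    define E where "E = greedy_ext (greedy_next up b) (take (Suc k) u) (n - Suc k)"
    have "take (Suc k) u \<in> RGF_bounded (Suc k) b" using RGF_bounded_take[OF that(1)] k(1) by simp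
    then have "E ! Suc p = greedy_succ (E ! p)"
      unfolding E_def using \<open>even b\<close> that(3,4) k(1)
      by (intro nth_Suc_greedy_ext_greedy_next) auto
    with that(2) show ?thesis by (simp add: E_def[symmetric])
  qed
  have s_greedy: "s = greedy_ext (greedy_next True b) (take (Suc k) s) (n - Suc k)"
    using no_between by (rule consecutive_coRGC_greedy(1)[OF s t k])
  have t_greedy: "t = greedy_ext (greedy_next False b) (take (Suc k) t) (n - Suc k)"
    using no_between by (rule consecutive_coRGC_greedy(2)[OF s t k])
  have recs: "s ! Suc p = greedy_succ (s ! p) \<and> t ! Suc p = greedy_succ (t ! p)"
    if "k < p" "Suc p < n" for p
    using rec[OF s s_greedy that] rec[OF t t_greedy that] ..
  obtain c where "c \<le> k + 3" "diff_positions s t = {k..<c}"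
    using diff_positions_of_collapsing_recurrence[where g = greedy_succ and z = 0,
        OF len k(1,2) differ recs greedy_succ_greedy_succ]
    by blast
  then show ?thesis by auto
qed

lemma adjacent_gray_sorted_RGF_bounded:
  assumes "even b" and L: "set L = RGF_bounded n b" and sorted: "sorted_wrt coRGC_less L"
  shows "adjacent_gray 3 L"
  unfolding adjacent_gray_def
proof (intro conjI allI impI)
  show "\<forall>x\<in>set L. \<forall>y\<in>set L. length x = length y" using L by (simp add: RGF_bounded_def)
  fix i assume i: "Suc i < length L"
  have "L ! i \<in> RGF_bounded n b" "L ! Suc i \<in> RGF_bounded n b"
    using L nth_mem[of i L] nth_mem[OF i] i by auto
  moreover have "coRGC_less (L ! i) (L ! Suc i)" using sorted_wrt_nth_less[OF sorted _ i] by simp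
  moreover have "False" if "w \<in> RGF_bounded n b" "coRGC_less (L ! i) w" "coRGC_less w (L ! Suc i)" for w
    using sorted_wrt_nth_Suc_no_between[OF sorted coRGC_less_asym i _ that(2,3)] that(1) L by blast
  ultimately have "card (diff_positions (L ! i) (L ! Suc i)) \<le> 3 \<and>
      (\<exists>a c. diff_positions (L ! i) (L ! Suc i) = {a..<c})"
    using consecutive_coRGC_diff_positions[OF \<open>even b\<close>] by blast
  then show "card (diff_positions (L ! i) (L ! Suc i)) \<le> 3"
    and "\<exists>a c. diff_positions (L ! i) (L ! Suc i) = {a..<c}" by simp_all
qed

theorem theorem2:
  fixes n b :: nat
  assumes "n \<ge> 1" and "b \<ge> 2" and "even b"
  shows "(\<exists>L. set L = RGF_bounded n b \<and> distinct L \<and> sorted_wrt coRGC_less L) \<and>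
         (\<forall>L. set L = RGF_bounded n b \<and> distinct L \<and> sorted_wrt coRGC_less L
              \<longrightarrow> adjacent_gray 3 L)"
proof (intro conjI allI impI)
  show "\<exists>L. set L = RGF_bounded n b \<and> distinct L \<and> sorted_wrt coRGC_less L"
    by (rule ex_sorted_wrt_list[OF finite_RGF_bounded coRGC_less_trans coRGC_less_asym])
      (simp add: coRGC_less_total RGF_bounded_def)
  show "adjacent_gray 3 L"
    if "set L = RGF_bounded n b \<and> distinct L \<and> sorted_wrt coRGC_less L" for L
    using adjacent_gray_sorted_RGF_bounded[OF \<open>even b\<close>] that by blast
qed

end
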